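(* Let $(W_{i,j})_{i\ge 1,\,0\le j\le N}$ be nonnegative integers with $\sum_i W_{i,j}<\infty$ for each $j$, and for each $j$ let $w_j$ be the one-rowed array consisting of $W_{1,j}$ copies of $1$, $W_{2,j}$ copies of $2$, $\dots$ (in weakly increasing order). Let $(L_{i,j})$ be the image of $(W_{i,j})$ under the tropicalization of the map $(V_{i,j})\mapsto (U_{i,j})$ defined by $$F(V_N)\cdots F(V_1)F(V_0)=F_{N+1}(U_{N+1})\cdots F_2(U_2)F_1(U_1).$$ Then, for $N$ sufficiently large, for all $i,j$ the number of entries equal to $i$ in the $j$-th row of the circled array $w_N\leftharpoonup w_{N-1}\leftharpoonup\cdots\leftharpoonup w_0$ equals $L_{i,j}$.
   Context: Let $M$ be the semifield of germs at $\epsilon=0$ of continuous positive functions $f(\epsilon)$, $\epsilon>0$, with $\lim_{\epsilon\to+0}\epsilon\log f(\epsilon)\in\mathbb{R}$, with usual $+,\cdot,{}^{-1}$, and let $\overline{f}=-\lim_{\epsilon\to+0}\epsilon\log f(\epsilon)$; this is a morphism $M\to\mathbb{R}$ sending $+$ to $\min$, $\cdot$ to $+$, ${}^{-1}$ to negation. For an infinite vector $V=(V_1,V_2,\dots)$, $F(V)$ is the infinite lower bidiagonal matrix with $1$ on the diagonal and $-V_1,-V_2,\dots$ on the subdiagonal, and $F_k(V)=\mathrm{diag}(\mathrm{Id}_{k-1},F(V))$. For vectors $V_j=(V_{1,j},V_{2,j},\dots)$, $j=0,\dots,N$, with entries in $M$, the vectors $U_j=(U_{1,j},U_{2,j},\dots)$,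 $j=1,\dots,N+1$, are uniquely determined by the displayed matrix equation and each $U_{i,j}$ is a subtraction-free rational expression in the $V$'s; the tropicalization is the piecewise-linear map $(W_{i,j})\mapsto(L_{i,j})$ obtained by replacing $+,\cdot,{}^{-1}$ by $\min,+,-$ in these expressions, i.e. $L_{i,j}=\overline{U_{i,j}}$ whenever $W_{i,j}=\overline{V_{i,j}}$. A circled array is a finite list of rows (row $1$, row $2$, $\dots$), each a finite weakly increasing sequence of positive integers regarded as circled numbers (empty rows allowed). A one-rowed array is a finite weakly increasing sequence of positive integers (boxed numbers). The action $C\leftharpoonup x$ of a one-rowed array $x$ on a circled array $C$ with rows $C_1,\dots,C_r$: put $x^{(1)}=x$; for $p=1,\dots,r$, list the circled entries of $C_p$ and the boxed entries of $x^{(p)}$ as a sequence of cells in the order: circled $1$'s, boxed $1$'s, circled $2$'s, boxed $2$'s, $\dots$. Regard circled cells as cells containing a ball and boxed cells as empty cells and perform one step of the Takahashi–Satsuma box-ball system: balls are moved one at a time from left to right, each to the nearest cell to its right that was originally empty and is not yet occupied by a moved ball; a ball with no such cell is discarded. Then each cell originally containing a ball becomes a boxed cell with its number decreased by one, each originally empty cell receiving a ball becomes a circled cell with the same number, other cells are unchanged, and boxed cells with number $0$ are deleted. The circled numbers, in order, form the new row $p$, and the boxed numbers, in order, form $x^{(p+1)}$. Finally $x^{(r+1)}$ is appended as a new last row (circled). For one-rowed arrays $x_1,\dots,x_n$, $x_1\leftharpoonup x_2\leftharpoonup\cdots\leftharpoonup x_n$ denotes the circled array obtained by acting successively with $x_1$,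 then $x_2$, $\dots$, then $x_n$ on the array with no rows. *)

theory Defs
  imports Complex_Main
begin

text \<open>A germ at 0 from the right is represented by a function real \<Rightarrow> real; only its
  values on some interval (0, delta) matter.  f is in M if it is continuous and positive on
  some (0, delta) and e * ln (f e) has a real limit as e tends to 0 from the right.\<close>

definition inM :: "(real \<Rightarrow> real) \<Rightarrow> bool" where
  "inM f \<longleftrightarrow> (\<exists>d>0. continuous_on {0<..<d} f \<and> (\<forall>e\<in>{0<..<d}. 0 < f e))
      \<and> (\<exists>c. ((\<lambda>e. e * ln (f e)) \<longlongrightarrow> c) (at_right 0))"

definition trop :: "(real \<Rightarrow> real) \<Rightarrow> real" where
  "trop f = - Lim (at_right 0) (\<lambda>e. e * ln (f e))"

text \<open>Matrices are indexed from 0 (row/column p corresponds to the paper's p+1);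
  vectors V = (V_1, V_2, ...) are indexed from 1.  All matrices below are lower
  triangular, so the product entry (a,b) is the finite sum over b \<le> c \<le> a.\<close>

definition idm :: "nat \<Rightarrow> nat \<Rightarrow> real" where
  "idm a b = (if a = b then 1 else 0)"

definition lmul :: "(nat \<Rightarrow> nat \<Rightarrow> real) \<Rightarrow> (nat \<Rightarrow> nat \<Rightarrow> real) \<Rightarrow> nat \<Rightarrow> nat \<Rightarrow> real" where
  "lmul A B a b = (\<Sum>c\<in>{b..a}. A a c * B c b)"

definition mprod :: "(nat \<Rightarrow> nat \<Rightarrow> real) list \<Rightarrow> nat \<Rightarrow> nat \<Rightarrow> real" where
  "mprod Ms = foldr lmul Ms idm"

definition Fm :: "(nat \<Rightarrow> real) \<Rightarrow> nat \<Rightarrow> nat \<Rightarrow> real" where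
  "Fm v a b = (if a = b then 1 else if a = Suc b then - v (Suc b) else 0)"

text \<open>F_k(V) = diag(Id_{k-1}, F(V)), for k \<ge> 1.\<close>
definition Fkm :: "nat \<Rightarrow> (nat \<Rightarrow> real) \<Rightarrow> nat \<Rightarrow> nat \<Rightarrow> real" where
  "Fkm k v a b = (if a < k - 1 \<or> b < k - 1 then (if a = b then 1 else 0)
                  else Fm v (a - (k - 1)) (b - (k - 1)))"

text \<open>Cells of one row: a list of (number, has_ball) pairs, in the order
  circled 1's, boxed 1's, circled 2's, boxed 2's, ...  (circled = ball).\<close>
definition cells :: "nat list \<Rightarrow> nat list \<Rightarrow> (nat \<times> bool) list" where
  "cells C x = concat (map (\<lambda>k. replicate (count_list C k) (k, True) @ replicate (count_list x k) (k, False))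
                 [1..<Suc (Max (insert 0 (set C \<union> set x)))])"

text \<open>One Takahashi-Satsuma step: balls are moved one at a time from left to right, each to
  the nearest cell to its right which was originally empty and is not yet occupied by a moved
  ball (if none exists, the ball is discarded).\<close>
definition tsstep :: "bool list \<Rightarrow> nat set" where
  "tsstep bs = fold (\<lambda>a S. if (\<exists>c. a < c \<and> c < length bs \<and> \<not> bs ! c \<and> c \<notin> S)
                           then insert (LEAST c. a < c \<and> c < length bs \<and> \<not> bs ! c \<and> c \<notin> S) S
                           else S)
                  (filter (\<lambda>a. bs ! a) [0..<length bs]) {}"

definition bbrow :: "nat list \<Rightarrow> nat list \<Rightarrow> nat list \<times> nat list" where
  "bbrow C x = (let cs = cells C x; S = tsstep (map snd cs); n = length cs in
     ( map (\<lambda>a. fst (cs ! a)) (filter (\<lambda>a. \<not> snd (cs ! a) \<and> a \<in> S) [0..<n]),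
       map (\<lambda>a. if snd (cs ! a) then fst (cs ! a) - 1 else fst (cs ! a))
         (filter (\<lambda>a. if snd (cs ! a) then fst (cs ! a) - 1 \<noteq> 0 else a \<notin> S) [0..<n])))"

fun act :: "nat list list \<Rightarrow> nat list \<Rightarrow> nat list list" where
  "act [] x = [x]"
| "act (r # rs) x = (let (r', x') = bbrow r x in r' # act rs x')"

text \<open>x_1 \<leftharpoonup> x_2 \<leftharpoonup> ... \<leftharpoonup> x_n : act with x_1, then x_2, ..., on the empty array.\<close>
definition acts :: "nat list list \<Rightarrow> nat list list" where
  "acts xs = foldl act [] xs"

definition warr :: "(nat \<Rightarrow> nat \<Rightarrow> nat) \<Rightarrow> nat \<Rightarrow> nat list" where
  "warr W j = concat (map (\<lambda>i. replicate (W i j) i)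
                 [1..<Suc (Max (insert 0 {i. 1 \<le> i \<and> W i j \<noteq> 0}))])"

end

theory Submission
  imports Defs
begin

text \<open>Multiplying the staircase \<open>F\<^sub>n(u\<^sub>n) \<cdots> F\<^sub>1(u\<^sub>1)\<close> on the right by a new factor
  \<open>F(x)\<close> is resolved by the local exchange \<open>F(r) F(x) = F\<^sub>2(x') F(r')\<close>, applied row after row.
  The new row \<open>r'\<close> and the passed vector \<open>x'\<close> are subtraction-free in \<open>r, x\<close>, and the
  staircase factorisation is unique, so the \<open>U\<close>'s are obtained by iterating this geometric action
  on \<open>V\<^sub>0, \<dots>, V\<^sub>N\<close>.  Tropicalising the exchange formulas gives min-plus recursions, and these
  are exactly the recursions satisfied by the number of \<open>i\<close>'s in a row under one box-ball step,
  which can be read off a carrier sweeping the cells from left to right.  Only finitely many rows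
  matter for any fixed entry, so the infinite families may be truncated.\<close>

section \<open>Lower triangular matrices\<close>

text \<open>\<open>lmul\<close> reads only entries on and below the diagonal and returns \<open>0\<close> above it, so matrix
  identities are stated on the lower triangle (or on its first \<open>K\<close> rows).\<close>

definition lower_eq :: "(nat \<Rightarrow> nat \<Rightarrow> real) \<Rightarrow> (nat \<Rightarrow> nat \<Rightarrow> real) \<Rightarrow> bool" where
  "lower_eq A B \<longleftrightarrow> (\<forall>a b. b \<le> a \<longrightarrow> A a b = B a b)"

definition lower_eq_below :: "nat \<Rightarrow> (nat \<Rightarrow> nat \<Rightarrow> real) \<Rightarrow> (nat \<Rightarrow> nat \<Rightarrow> real) \<Rightarrow> bool" where
  "lower_eq_below K A B \<longleftrightarrow> (\<forall>a b. b \<le> a \<longrightarrow> a < K \<longrightarrow> A a b = B a b)"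

lemma lower_eq_imp_below: "lower_eq A B \<Longrightarrow> lower_eq_below K A B"
  by (simp add: lower_eq_def lower_eq_below_def)

lemma lower_eq_refl [simp]: "lower_eq A A"
  by (simp add: lower_eq_def)

lemma lower_eq_sym: "lower_eq A B \<Longrightarrow> lower_eq B A"
  by (simp add: lower_eq_def)

lemma lower_eq_trans [trans]: "lower_eq A B \<Longrightarrow> lower_eq B C \<Longrightarrow> lower_eq A C"
  by (simp add: lower_eq_def)

lemma lower_eq_below_refl [simp]: "lower_eq_below K A A"
  by (simp add: lower_eq_below_def)

lemma lower_eq_below_sym: "lower_eq_below K A B \<Longrightarrow> lower_eq_below K B A"
  by (simp add: lower_eq_below_def)

lemma lower_eq_below_trans [trans]: "lower_eq_below K A B \<Longrightarrow> lower_eq_below K B C \<Longrightarrow> lower_eq_below K A C"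
  by (simp add: lower_eq_below_def)

lemma lmul_cong_lower: "lower_eq A A' \<Longrightarrow> lower_eq B B' \<Longrightarrow> lower_eq (lmul A B) (lmul A' B')"
  unfolding lower_eq_def lmul_def by (auto intro!: sum.cong)

lemma lmul_cong_below:
  "lower_eq_below K A A' \<Longrightarrow> lower_eq_below K B B' \<Longrightarrow> lower_eq_below K (lmul A B) (lmul A' B')"
  unfolding lower_eq_below_def lmul_def by (auto intro!: sum.cong)

lemma mprod_cong_below: "list_all2 (lower_eq_below K) As Bs \<Longrightarrow> lower_eq_below K (mprod As) (mprod Bs)"
proof (induction As arbitrary: Bs)
  case Nil
  then show ?case by (simp add: mprod_def)
next
  case (Cons A As)
  then obtain B Bs' where "Bs = B # Bs'" by (cases Bs) auto
  with Cons show ?case by (auto simp: mprod_def intro: lmul_cong_below)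
qed

lemma lmul_assoc: "lmul (lmul A B) C = lmul A (lmul B C)"
proof (intro ext)
  fix a b
  have "lmul (lmul A B) C a b = (\<Sum>c\<in>{b..a}. \<Sum>d\<in>{d\<in>{b..a}. c \<le> d}. A a d * B d c * C c b)"
    unfolding lmul_def sum_distrib_right by (intro sum.cong) auto
  also have "\<dots> = (\<Sum>d\<in>{b..a}. \<Sum>c\<in>{c\<in>{b..a}. c \<le> d}. A a d * B d c * C c b)"
    by (rule sum.swap_restrict) auto
  also have "\<dots> = lmul A (lmul B C) a b"
    unfolding lmul_def sum_distrib_left by (intro sum.cong) (auto simp: mult.assoc)
  finally show "lmul (lmul A B) C a b = lmul A (lmul B C) a b" .
qed

lemma lmul_idm_left: "lower_eq (lmul idm B) B"
  unfolding lower_eq_def lmul_def idm_def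
proof (intro allI impI)
  fix a b :: nat
  assume "b \<le> a"
  have "(\<Sum>c\<in>{b..a}. (if a = c then 1 else 0) * B c b) = (\<Sum>c\<in>{b..a}. if a = c then B c b else 0)"
    by (intro sum.cong) auto
  with \<open>b \<le> a\<close> show "(\<Sum>c\<in>{b..a}. (if a = c then 1 else 0) * B c b) = B a b"
    by (simp add: sum.delta)
qed

lemma lmul_idm_right: "lower_eq (lmul A idm) A"
  unfolding lower_eq_def lmul_def idm_def by (auto simp: sum.delta' if_distrib cong: if_cong)

lemma mprod_append: "lower_eq (mprod (xs @ ys)) (lmul (mprod xs) (mprod ys))"
proof (induction xs)
  case Nil
  then show ?case by (simp add: mprod_def lower_eq_sym[OF lmul_idm_left])
next
  case (Cons x xs)
  then have "lower_eq (lmul x (mprod (xs @ ys))) (lmul x (lmul (mprod xs) (mprod ys)))"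
    by (intro lmul_cong_lower) simp_all
  then show ?case by (simp add: mprod_def lmul_assoc)
qed

lemma mprod_snoc: "lower_eq (mprod (xs @ [y])) (lmul (mprod xs) y)"
  using mprod_append[of xs "[y]"] lmul_cong_lower[OF lower_eq_refl lmul_idm_right, of "mprod xs" y]
  by (auto simp: mprod_def intro: lower_eq_trans)

definition mshift :: "nat \<Rightarrow> (nat \<Rightarrow> nat \<Rightarrow> real) \<Rightarrow> nat \<Rightarrow> nat \<Rightarrow> real" where
  "mshift s M a b = (if a < s \<or> b < s then idm a b else M (a - s) (b - s))"

lemma Fkm_eq_mshift: "Fkm k v = mshift (k - 1) (Fm v)"
  by (intro ext) (simp add: Fkm_def mshift_def idm_def)

lemma mshift_idm [simp]: "mshift s idm = idm"
  by (intro ext) (auto simp: mshift_def idm_def)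

lemma mshift_0 [simp]: "mshift 0 M = M"
  by (intro ext) (simp add: mshift_def)

lemma mshift_mshift: "mshift s (mshift t M) = mshift (s + t) M"
  by (intro ext) (auto simp: mshift_def idm_def)

lemma mshift_cong_lower: "lower_eq A B \<Longrightarrow> lower_eq (mshift s A) (mshift s B)"
  by (auto simp: lower_eq_def mshift_def)

lemma lmul_mshift: "lower_eq (lmul (mshift s A) (mshift s B)) (mshift s (lmul A B))"
  unfolding lower_eq_def
proof (intro allI impI)
  fix a b :: nat
  assume ba: "b \<le> a"
  show "lmul (mshift s A) (mshift s B) a b = mshift s (lmul A B) a b"
  proof (cases "b < s")
    case True
    have "lmul (mshift s A) (mshift s B) a b = (\<Sum>c\<in>{b..a}. mshift s A a c * (if c = b then 1 else 0))"
      unfolding lmul_def using True by (intro sum.cong) (auto simp: mshift_def idm_def)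
    also have "\<dots> = mshift s A a b"
      using ba by (simp add: if_distrib sum.delta' cong: if_cong)
    also have "\<dots> = mshift s (lmul A B) a b"
      using True by (simp add: mshift_def)
    finally show ?thesis .
  next
    case False
    with ba have "lmul (mshift s A) (mshift s B) a b = (\<Sum>c\<in>{b - s + s..a - s + s}. A (a - s) (c - s) * B (c - s) (b - s))"
      unfolding lmul_def by (intro sum.cong) (auto simp: mshift_def)
    also have "\<dots> = (\<Sum>c\<in>{b - s..a - s}. A (a - s) c * B c (b - s))"
      by (simp only: sum.shift_bounds_cl_nat_ivl) simp
    also have "\<dots> = mshift s (lmul A B) a b"
      using False ba by (simp add: mshift_def lmul_def)
    finally show ?thesis .
  qed
qed

definition bidiagonal :: "(nat \<Rightarrow> nat \<Rightarrow> real) \<Rightarrow> bool" where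
  "bidiagonal A \<longleftrightarrow> (\<forall>a c. c \<noteq> a \<and> a \<noteq> Suc c \<longrightarrow> A a c = 0)"

lemma Fm_diag [simp]: "Fm v a a = 1"
  by (simp add: Fm_def)

lemma Fm_far: "a \<noteq> b \<Longrightarrow> a \<noteq> Suc b \<Longrightarrow> Fm v a b = 0"
  by (simp add: Fm_def)

lemma bidiagonal_Fm: "bidiagonal (Fm v)"
  by (auto simp: bidiagonal_def Fm_def)

lemma bidiagonal_mshift: "bidiagonal M \<Longrightarrow> bidiagonal (mshift s M)"
  unfolding bidiagonal_def mshift_def idm_def
proof (intro allI impI)
  fix a c
  assume M: "\<forall>a c. c \<noteq> a \<and> a \<noteq> Suc c \<longrightarrow> M a c = 0" and ac: "c \<noteq> a \<and> a \<noteq> Suc c"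
  show "(if a < s \<or> c < s then if a = c then 1 else 0 else M (a - s) (c - s)) = 0"
  proof (cases "a < s \<or> c < s")
    case False
    with ac have "c - s \<noteq> a - s \<and> a - s \<noteq> Suc (c - s)" by auto
    with M False show ?thesis by auto
  qed (use ac in auto)
qed

lemma lmul_bidiagonal:
  assumes "bidiagonal A" "b \<le> a"
  shows "lmul A B a b = A a a * B a b + (if b < a then A a (a - 1) * B (a - 1) b else 0)"
proof (cases "b < a")
  case False
  with assms show ?thesis by (simp add: lmul_def)
next
  case True
  have "lmul A B a b = (\<Sum>c\<in>{a - 1, a}. A a c * B c b)"
    unfolding lmul_def using assms True by (intro sum.mono_neutral_right) (auto simp: bidiagonal_def)
  with True show ?thesis by simp
qed

section \<open>The geometric action\<close>

definition pos_at :: "(nat \<Rightarrow> real \<Rightarrow> real) \<Rightarrow> real \<Rightarrow> bool" where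
  "pos_at r e \<longleftrightarrow> (\<forall>i\<ge>1. 0 < r i e)"

definition vec_at :: "(nat \<Rightarrow> real \<Rightarrow> real) \<Rightarrow> real \<Rightarrow> nat \<Rightarrow> real" where
  "vec_at f e = (\<lambda>i. f i e)"

text \<open>Solving \<open>F(r) F(x) = F\<^sub>2(x') F(r')\<close> for a new row \<open>r' = grow r x\<close> and a vector
  \<open>x' = gpass r x\<close> passed on amounts to \<open>r'\<^sub>i + x'\<^sub>i\<^sub>-\<^sub>1 = r\<^sub>i + x\<^sub>i\<close> and
  \<open>r'\<^sub>i x'\<^sub>i = r\<^sub>i\<^sub>+\<^sub>1 x\<^sub>i\<close>; the carry \<open>gcarry r x i\<close> is \<open>r\<^sub>i\<^sub>+\<^sub>1 - x'\<^sub>i\<close>.\<close>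

fun gcarry :: "(nat \<Rightarrow> real \<Rightarrow> real) \<Rightarrow> (nat \<Rightarrow> real \<Rightarrow> real) \<Rightarrow> nat \<Rightarrow> real \<Rightarrow> real" where
  "gcarry r x 0 e = r 1 e"
| "gcarry r x (Suc n) e = r (Suc (Suc n)) e * gcarry r x n e / (gcarry r x n e + x (Suc n) e)"

definition grow :: "(nat \<Rightarrow> real \<Rightarrow> real) \<Rightarrow> (nat \<Rightarrow> real \<Rightarrow> real) \<Rightarrow> nat \<Rightarrow> real \<Rightarrow> real" where
  "grow r x i e = x i e + gcarry r x (i - 1) e"

definition gpass :: "(nat \<Rightarrow> real \<Rightarrow> real) \<Rightarrow> (nat \<Rightarrow> real \<Rightarrow> real) \<Rightarrow> nat \<Rightarrow> real \<Rightarrow> real" where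
  "gpass r x i e = r (Suc i) e * x i e / grow r x i e"

lemma gcarry_pos: "pos_at r e \<Longrightarrow> pos_at x e \<Longrightarrow> 0 < gcarry r x n e"
proof (induction n)
  case (Suc n)
  then have "0 < r (Suc (Suc n)) e" "0 < x (Suc n) e" by (auto simp: pos_at_def)
  with Suc show ?case by simp
qed (auto simp: pos_at_def)

lemma pos_at_grow: "pos_at r e \<Longrightarrow> pos_at x e \<Longrightarrow> pos_at (grow r x) e"
  using gcarry_pos[of r e x] by (auto simp: pos_at_def grow_def add_pos_pos)

lemma pos_at_gpass: "pos_at r e \<Longrightarrow> pos_at x e \<Longrightarrow> pos_at (gpass r x) e"
  using pos_at_grow[of r e x] by (auto simp: pos_at_def gpass_def)

lemma grow_add_gpass:
  assumes "pos_at r e" "pos_at x e" "1 \<le> i"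
  shows "grow r x (Suc i) e + gpass r x i e = r (Suc i) e + x (Suc i) e"
proof -
  obtain m where i: "i = Suc m" using \<open>1 \<le> i\<close> by (cases i) auto
  have "0 < gcarry r x m e + x i e"
    using assms gcarry_pos[of r e x m] by (auto simp: pos_at_def add_pos_pos)
  then have "gcarry r x i e + gpass r x i e = r (Suc i) e"
    by (simp add: i gpass_def grow_def add.commute add_divide_distrib[symmetric] ring_distribs[symmetric])
  then show ?thesis by (simp add: grow_def)
qed

lemma Fm_exchange:
  assumes pr: "pos_at r e" and px: "pos_at x e"
  shows "lower_eq (lmul (Fm (vec_at r e)) (Fm (vec_at x e)))
                  (lmul (mshift 1 (Fm (vec_at (gpass r x) e))) (Fm (vec_at (grow r x) e)))"
  unfolding lower_eq_def
proof (intro allI impI)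
  fix a b :: nat
  assume ba: "b \<le> a"
  let ?R = "vec_at r e" and ?X = "vec_at x e" and ?R' = "vec_at (grow r x) e" and ?X' = "vec_at (gpass r x) e"
  have L: "lmul (Fm ?R) (Fm ?X) a b
      = Fm ?X a b + (if b < a then Fm ?R a (a - 1) * Fm ?X (a - 1) b else 0)"
    using lmul_bidiagonal[OF bidiagonal_Fm ba] by (simp add: Fm_def)
  have R: "lmul (mshift 1 (Fm ?X')) (Fm ?R') a b
      = Fm ?R' a b + (if b < a then mshift 1 (Fm ?X') a (a - 1) * Fm ?R' (a - 1) b else 0)"
    using lmul_bidiagonal[OF bidiagonal_mshift[OF bidiagonal_Fm] ba] by (simp add: mshift_def idm_def)
  consider "a = b" | "a = Suc b" | "a = Suc (Suc b)" | "Suc (Suc b) < a"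
    using ba by linarith
  then show "lmul (Fm ?R) (Fm ?X) a b = lmul (mshift 1 (Fm ?X')) (Fm ?R') a b"
  proof cases
    case 2
    show ?thesis
    proof (cases b)
      case 0
      with L R 2 show ?thesis by (simp add: mshift_def idm_def Fm_def vec_at_def grow_def)
    next
      case (Suc m)
      with grow_add_gpass[OF pr px, of b] L R 2 show ?thesis
        by (simp add: mshift_def idm_def Fm_def vec_at_def algebra_simps)
    qed
  next
    case 3
    have "0 < grow r x (Suc b) e"
      by (rule pos_at_grow[OF pr px, unfolded pos_at_def, rule_format]) simp
    then have "gpass r x (Suc b) e * grow r x (Suc b) e = r (Suc (Suc b)) e * x (Suc b) e"
      by (simp add: gpass_def)
    with L R 3 show ?thesis by (simp add: mshift_def idm_def Fm_def vec_at_def)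
  next
    case 4
    with L R show ?thesis by (simp add: mshift_def idm_def Fm_far)
  qed (use L R in simp)
qed

text \<open>\<open>Fk_prod [u\<^sub>1, \<dots>, u\<^sub>n]\<close> is \<open>F\<^sub>n(u\<^sub>n) \<cdots> F\<^sub>1(u\<^sub>1)\<close>.\<close>

fun Fk_prod :: "(nat \<Rightarrow> real) list \<Rightarrow> nat \<Rightarrow> nat \<Rightarrow> real" where
  "Fk_prod [] = idm"
| "Fk_prod (u # us) = lmul (mshift 1 (Fk_prod us)) (Fm u)"

lemma Fk_prod_diag [simp]: "Fk_prod us a a = 1"
  by (induction us arbitrary: a) (simp_all add: lmul_def mshift_def idm_def)

lemma mprod_Fkm_eq_mshift_Fk_prod:
  "lower_eq (mprod (map (\<lambda>k. Fkm k (u k)) (rev [Suc s..<Suc s + m]))) (mshift s (Fk_prod (map u [Suc s..<Suc s + m])))"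
proof (induction m arbitrary: s)
  case 0
  then show ?case by (simp add: mprod_def)
next
  case (Suc m)
  let ?T = "[Suc (Suc s)..<Suc (Suc s) + m]"
  have ivl: "[Suc s..<Suc s + Suc m] = Suc s # ?T"
    by (simp add: upt_conv_Cons)
  have "lower_eq (mprod (map (\<lambda>k. Fkm k (u k)) (rev ?T) @ [Fkm (Suc s) (u (Suc s))]))
                 (lmul (mprod (map (\<lambda>k. Fkm k (u k)) (rev ?T))) (Fkm (Suc s) (u (Suc s))))"
    by (rule mprod_snoc)
  also have "lower_eq \<dots> (lmul (mshift s (mshift 1 (Fk_prod (map u ?T)))) (mshift s (Fm (u (Suc s)))))"
    using Suc.IH[of "Suc s"] by (simp add: Fkm_eq_mshift mshift_mshift lmul_cong_lower)
  also have "lower_eq \<dots> (mshift s (Fk_prod (u (Suc s) # map u ?T)))"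
    by (simp only: Fk_prod.simps lmul_mshift)
  finally show ?case
    unfolding ivl by simp
qed

fun gact :: "(nat \<Rightarrow> real \<Rightarrow> real) list \<Rightarrow> (nat \<Rightarrow> real \<Rightarrow> real) \<Rightarrow> (nat \<Rightarrow> real \<Rightarrow> real) list" where
  "gact [] x = [x]"
| "gact (r # rs) x = grow r x # gact rs (gpass r x)"

definition gacts :: "(nat \<Rightarrow> real \<Rightarrow> real) list \<Rightarrow> (nat \<Rightarrow> real \<Rightarrow> real) list" where
  "gacts xs = foldl gact [] xs"

lemma length_gact [simp]: "length (gact rs x) = Suc (length rs)"
  by (induction rs arbitrary: x) auto

lemma length_gacts [simp]: "length (gacts xs) = length xs"
  unfolding gacts_def by (induction xs rule: rev_induct) auto

lemma pos_at_gact: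
  "list_all (\<lambda>r. pos_at r e) rs \<Longrightarrow> pos_at x e \<Longrightarrow> list_all (\<lambda>r. pos_at r e) (gact rs x)"
  by (induction rs arbitrary: x) (auto intro: pos_at_grow pos_at_gpass)

lemma pos_at_gacts: "list_all (\<lambda>r. pos_at r e) xs \<Longrightarrow> list_all (\<lambda>r. pos_at r e) (gacts xs)"
  by (induction xs rule: rev_induct) (auto simp: gacts_def intro: pos_at_gact)

lemma lmul_Fk_prod_Fm:
  "list_all (\<lambda>r. pos_at r e) rs \<Longrightarrow> pos_at x e \<Longrightarrow>
   lower_eq (lmul (Fk_prod (map (\<lambda>r. vec_at r e) rs)) (Fm (vec_at x e))) (Fk_prod (map (\<lambda>r. vec_at r e) (gact rs x)))"
proof (induction rs arbitrary: x)
  case Nil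
  then show ?case by simp
next
  case (Cons r rs)
  then have pr: "pos_at r e" and prs: "list_all (\<lambda>r. pos_at r e) rs" by auto
  let ?P = "Fk_prod (map (\<lambda>r. vec_at r e) rs)"
  have "lower_eq (lmul (Fk_prod (map (\<lambda>r. vec_at r e) (r # rs))) (Fm (vec_at x e)))
      (lmul (mshift 1 ?P) (lmul (Fm (vec_at r e)) (Fm (vec_at x e))))"
    by (simp add: lmul_assoc)
  also have "lower_eq \<dots> (lmul (mshift 1 ?P) (lmul (mshift 1 (Fm (vec_at (gpass r x) e))) (Fm (vec_at (grow r x) e))))"
    by (rule lmul_cong_lower[OF lower_eq_refl Fm_exchange[OF pr Cons.prems(2)]])
  also have "lower_eq \<dots> (lmul (lmul (mshift 1 ?P) (mshift 1 (Fm (vec_at (gpass r x) e)))) (Fm (vec_at (grow r x) e)))"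
    by (simp add: lmul_assoc)
  also have "lower_eq \<dots> (lmul (mshift 1 (lmul ?P (Fm (vec_at (gpass r x) e)))) (Fm (vec_at (grow r x) e)))"
    by (intro lmul_cong_lower lmul_mshift lower_eq_refl)
  also have "lower_eq \<dots> (Fk_prod (map (\<lambda>r. vec_at r e) (gact (r # rs) x)))"
    using lmul_cong_lower[OF mshift_cong_lower[OF Cons.IH[OF prs pos_at_gpass[OF pr Cons.prems(2)]]] lower_eq_refl]
    by simp
  finally show ?case .
qed

lemma mprod_Fm_eq_Fk_prod_gacts:
  "list_all (\<lambda>r. pos_at r e) xs \<Longrightarrow>
   lower_eq (mprod (map (\<lambda>v. Fm (vec_at v e)) xs)) (Fk_prod (map (\<lambda>r. vec_at r e) (gacts xs)))"
proof (induction xs rule: rev_induct)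
  case Nil
  then show ?case by (simp add: mprod_def gacts_def)
next
  case (snoc y xs)
  then have pxs: "list_all (\<lambda>r. pos_at r e) xs" and py: "pos_at y e" by auto
  have "lower_eq (mprod (map (\<lambda>v. Fm (vec_at v e)) (xs @ [y]))) (lmul (mprod (map (\<lambda>v. Fm (vec_at v e)) xs)) (Fm (vec_at y e)))"
    using mprod_snoc by simp
  also have "lower_eq \<dots> (lmul (Fk_prod (map (\<lambda>r. vec_at r e) (gacts xs))) (Fm (vec_at y e)))"
    using snoc.IH[OF pxs] by (intro lmul_cong_lower lower_eq_refl)
  also have "lower_eq \<dots> (Fk_prod (map (\<lambda>r. vec_at r e) (gacts (xs @ [y]))))"
    using lmul_Fk_prod_Fm[OF pos_at_gacts[OF pxs] py] by (simp add: gacts_def)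
  finally show ?case .
qed

section \<open>Uniqueness of the staircase factorisation\<close>

definition Fm_inv :: "(nat \<Rightarrow> real) \<Rightarrow> nat \<Rightarrow> nat \<Rightarrow> real" where
  "Fm_inv u a b = (if b \<le> a then \<Prod>i\<in>{Suc b..a}. u i else 0)"

lemma lmul_Fm_Fm_inv: "lower_eq (lmul (Fm u) (Fm_inv u)) idm"
  unfolding lower_eq_def
proof (intro allI impI)
  fix a b :: nat
  assume ba: "b \<le> a"
  show "lmul (Fm u) (Fm_inv u) a b = idm a b"
  proof (cases "b < a")
    case True
    then obtain a' where a': "a = Suc a'" "b \<le> a'" by (cases a) auto
    then have "(\<Prod>i\<in>{Suc b..a}. u i) = (\<Prod>i\<in>{Suc b..a'}. u i) * u a"
      by (simp add: prod.nat_ivl_Suc')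
    with lmul_bidiagonal[OF bidiagonal_Fm ba, of u "Fm_inv u"] True a' show ?thesis
      by (simp add: Fm_inv_def idm_def Fm_def)
  next
    case False
    with lmul_bidiagonal[OF bidiagonal_Fm ba, of u "Fm_inv u"] ba show ?thesis
      by (simp add: Fm_inv_def idm_def)
  qed
qed

lemma lmul_Fm_Fm_inv_right: "lower_eq (lmul (lmul M (Fm u)) (Fm_inv u)) M"
proof -
  have "lower_eq (lmul M (lmul (Fm u) (Fm_inv u))) (lmul M idm)"
    by (rule lmul_cong_lower[OF lower_eq_refl lmul_Fm_Fm_inv])
  then show ?thesis
    using lmul_idm_right[of M] by (auto simp: lmul_assoc intro: lower_eq_trans)
qed

lemma lmul_Fm_Fm_inv_col0:
  assumes "1 \<le> c"
  shows "lmul (Fm w) (Fm_inv u) c 0 = (\<Prod>i\<in>{1..c - 1}. u i) * (u c - w c)"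
proof -
  obtain c' where c': "c = Suc c'" using assms by (cases c) auto
  have "(\<Prod>i\<in>{1..c}. u i) = (\<Prod>i\<in>{1..c'}. u i) * u c"
    by (simp add: c' prod.nat_ivl_Suc')
  with lmul_bidiagonal[OF bidiagonal_Fm, of 0 c w "Fm_inv u"] c' show ?thesis
    by (simp add: Fm_inv_def Fm_def algebra_simps)
qed

text \<open>Below the diagonal, column \<open>0\<close> of \<open>mshift 1 B \<cdot> G\<close> has entry \<open>G c 0\<close> plus a
  combination of the \<open>G d 0\<close> with \<open>1 \<le> d < c\<close>, whereas that column of \<open>mshift 1 A\<close> vanishes.\<close>

lemma first_column_vanishes:
  assumes H: "lower_eq_below K (mshift 1 A) (lmul (mshift 1 B) G)" and Bd: "\<And>a. B a a = 1"
    and c: "1 \<le> c" "c < K"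
  shows "G c 0 = 0"
  using c
proof (induction c rule: less_induct)
  case (less c)
  have "lmul (mshift 1 B) G c 0 = (\<Sum>d\<in>{c}. mshift 1 B c d * G d 0)"
    unfolding lmul_def
  proof (rule sum.mono_neutral_right)
    show "\<forall>d\<in>{0..c} - {c}. mshift 1 B c d * G d 0 = 0"
      using less by (auto simp: mshift_def idm_def)
  qed auto
  also have "\<dots> = G c 0"
    using less.prems Bd by (simp add: mshift_def)
  finally show ?case
    using H less.prems unfolding lower_eq_below_def by (force simp: mshift_def idm_def)
qed

lemma lower_eq_below_mshift_1D:
  "lower_eq_below K (mshift 1 A) (mshift 1 B) \<Longrightarrow> lower_eq_below (K - 1) A B"
  unfolding lower_eq_below_def
proof (intro allI impI)
  fix a b
  assume "\<forall>a b. b \<le> a \<longrightarrow> a < K \<longrightarrow> mshift 1 A a b = mshift 1 B a b" "b \<le> a" "a < K - 1"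
  then show "A a b = B a b" by (force simp: mshift_def dest: spec[of _ "Suc a"])
qed

lemma lmul_mshift_Fm_cancel:
  assumes pos: "\<forall>i\<ge>1. 0 < u i"
    and H: "lower_eq_below K (lmul (mshift 1 A) (Fm u)) (lmul (mshift 1 B) (Fm w))"
    and Bd: "\<And>a. B a a = 1"
  shows "\<forall>i. 1 \<le> i \<and> i < K \<longrightarrow> w i = u i" and "lower_eq_below (K - 1) A B"
proof -
  have cancel: "lower_eq_below K (lmul (lmul (mshift 1 M) (Fm u)) (Fm_inv u)) (mshift 1 M)" for M
    by (rule lower_eq_imp_below[OF lmul_Fm_Fm_inv_right])
  have "lower_eq_below K (mshift 1 A) (lmul (lmul (mshift 1 B) (Fm w)) (Fm_inv u))"
    using lmul_cong_below[OF H lower_eq_below_refl, of "Fm_inv u"] cancel[of A]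
    by (blast intro: lower_eq_below_trans lower_eq_below_sym)
  then have AB: "lower_eq_below K (mshift 1 A) (lmul (mshift 1 B) (lmul (Fm w) (Fm_inv u)))"
    by (simp add: lmul_assoc)
  have "lmul (Fm w) (Fm_inv u) c 0 = 0" if "1 \<le> c" "c < K" for c
    by (rule first_column_vanishes[OF AB Bd that])
  moreover have "(\<Prod>i\<in>{1..c - 1}. u i) \<noteq> 0" for c
    using pos by (intro prod_pos[THEN less_imp_neq, symmetric]) auto
  ultimately show wu: "\<forall>i. 1 \<le> i \<and> i < K \<longrightarrow> w i = u i"
    by (simp add: lmul_Fm_Fm_inv_col0 del: prod_zero_iff)
  then have "lower_eq_below K (Fm w) (Fm u)"
    by (auto simp: lower_eq_below_def Fm_def)
  then have "lower_eq_below K (lmul (mshift 1 A) (Fm u)) (lmul (mshift 1 B) (Fm u))"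
    using H lmul_cong_below[OF lower_eq_below_refl, of K "Fm w" "Fm u" "mshift 1 B"]
    by (blast intro: lower_eq_below_trans)
  then have "lower_eq_below K (mshift 1 A) (mshift 1 B)"
    using lmul_cong_below[OF _ lower_eq_below_refl, of K _ _ "Fm_inv u"] cancel[of A] cancel[of B]
    by (meson lower_eq_below_sym lower_eq_below_trans)
  then show "lower_eq_below (K - 1) A B"
    by (rule lower_eq_below_mshift_1D)
qed

lemma Fk_prod_unique_below:
  "list_all (\<lambda>u. \<forall>i\<ge>1. 0 < u i) us \<Longrightarrow> length ws = length us \<Longrightarrow>
   lower_eq_below K (Fk_prod us) (Fk_prod ws) \<Longrightarrow> j < length us \<Longrightarrow> 1 \<le> i \<Longrightarrow> i + j < K \<Longrightarrow>
   (ws ! j) i = (us ! j) i"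
proof (induction us arbitrary: ws K j)
  case Nil
  then show ?case by simp
next
  case (Cons u us)
  then obtain w ws' where ws: "ws = w # ws'" by (cases ws) auto
  with Cons.prems have "\<forall>i. 1 \<le> i \<and> i < K \<longrightarrow> w i = u i" "lower_eq_below (K - 1) (Fk_prod us) (Fk_prod ws')"
    using lmul_mshift_Fm_cancel[of u K "Fk_prod us" "Fk_prod ws'" w] by auto
  with Cons ws show ?case
    by (cases j) auto
qed

section \<open>Tropicalisation\<close>

definition has_trop :: "(real \<Rightarrow> real) \<Rightarrow> real \<Rightarrow> bool" where
  "has_trop f w \<longleftrightarrow> inM f \<and> trop f = w"

lemma eventually_at_right_0_iff_ex:
  assumes "\<And>d d'. 0 < d' \<Longrightarrow> d' \<le> d \<Longrightarrow> P d \<Longrightarrow> P d'"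
  shows "(\<forall>\<^sub>F d in at_right (0::real). P d) \<longleftrightarrow> (\<exists>d>0. P d)"
  unfolding eventually_at_right_field
proof safe
  fix b :: real
  assume "0 < b" "\<forall>y>0. y < b \<longrightarrow> P y"
  then show "\<exists>d>0. P d" by (intro exI[of _ "b / 2"]) auto
next
  fix d :: real
  assume "0 < d" "P d"
  with assms show "\<exists>b>0. \<forall>y>0. y < b \<longrightarrow> P y" by (intro exI[of _ d]) (auto intro: less_imp_le)
qed

lemma eventually_at_right_0_interval_iff:
  "(\<forall>\<^sub>F d in at_right (0::real). \<forall>e\<in>{0<..<d}. P e) \<longleftrightarrow> (\<forall>\<^sub>F e in at_right 0. P e)"
  unfolding eventually_at_right_field
proof safe
  fix b :: real
  assume "0 < b" "\<forall>d>0. d < b \<longrightarrow> (\<forall>e\<in>{0<..<d}. P e)"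
  then have "P e" if "0 < e" "e < b" for e
    using that by (auto dest!: spec[of _ "(e + b) / 2"])
  with \<open>0 < b\<close> show "\<exists>b>0. \<forall>e>0. e < b \<longrightarrow> P e" by blast
qed auto

lemma has_trop_iff:
  "has_trop f w \<longleftrightarrow> (\<forall>\<^sub>F d in at_right 0. continuous_on {0<..<d} f \<and> (\<forall>e\<in>{0<..<d}. 0 < f e))
      \<and> ((\<lambda>e. e * ln (f e)) \<longlongrightarrow> - w) (at_right 0)"
proof -
  have ev: "(\<forall>\<^sub>F d in at_right 0. continuous_on {0<..<d} f \<and> (\<forall>e\<in>{0<..<d}. 0 < f e))
      \<longleftrightarrow> (\<exists>d>0. continuous_on {0<..<d} f \<and> (\<forall>e\<in>{0<..<d}. 0 < f e))"
    by (rule eventually_at_right_0_iff_ex) (auto elim: continuous_on_subset)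
  have "trop f = - c" if "((\<lambda>e. e * ln (f e)) \<longlongrightarrow> c) (at_right 0)" for c
    unfolding trop_def using tendsto_Lim[OF trivial_limit_at_right_real that] by simp
  then show ?thesis
    unfolding has_trop_def inM_def ev by force
qed

lemma has_trop_pos:
  assumes "has_trop f w"
  shows "\<forall>\<^sub>F e in at_right 0. 0 < f e"
proof -
  from assms have "\<forall>\<^sub>F d in at_right 0. \<forall>e\<in>{0<..<d}. 0 < f e"
    unfolding has_trop_iff by (auto elim: eventually_mono)
  then show ?thesis by (simp add: eventually_at_right_0_interval_iff)
qed

lemma has_trop_cong:
  assumes f: "has_trop f w" and eq: "\<forall>\<^sub>F e in at_right 0. f e = g e"
  shows "has_trop g w"
proof -
  have "\<forall>\<^sub>F d in at_right 0. \<forall>e\<in>{0<..<d}. f e = g e"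
    using eq by (simp add: eventually_at_right_0_interval_iff)
  moreover have "\<forall>\<^sub>F d in at_right 0. continuous_on {0<..<d} f \<and> (\<forall>e\<in>{0<..<d}. 0 < f e)"
    using f unfolding has_trop_iff by blast
  ultimately have "\<forall>\<^sub>F d in at_right 0. continuous_on {0<..<d} g \<and> (\<forall>e\<in>{0<..<d}. 0 < g e)"
    by eventually_elim (metis continuous_on_cong)
  moreover have "((\<lambda>e. e * ln (g e)) \<longlongrightarrow> - w) (at_right 0)"
  proof (rule tendsto_cong[THEN iffD1])
    show "\<forall>\<^sub>F e in at_right 0. e * ln (f e) = e * ln (g e)"
      using eq by (auto elim: eventually_mono)
  qed (use f in \<open>simp add: has_trop_iff\<close>)
  ultimately show ?thesis
    unfolding has_trop_iff by blast
qed

lemma has_trop_eventually_continuous_pos: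
  "has_trop f w \<Longrightarrow> \<forall>\<^sub>F d in at_right 0. continuous_on {0<..<d} f \<and> (\<forall>e\<in>{0<..<d}. 0 < f e)"
  and has_trop_tendsto: "has_trop f w \<Longrightarrow> ((\<lambda>e. e * ln (f e)) \<longlongrightarrow> - w) (at_right 0)"
  by (simp_all add: has_trop_iff)

lemma has_trop_one: "has_trop (\<lambda>e. 1) 0"
  unfolding has_trop_iff by simp

lemma has_trop_mult:
  assumes f: "has_trop f a" and g: "has_trop g b"
  shows "has_trop (\<lambda>e. f e * g e) (a + b)"
proof -
  have "\<forall>\<^sub>F d in at_right 0. continuous_on {0<..<d} (\<lambda>e. f e * g e) \<and> (\<forall>e\<in>{0<..<d}. 0 < f e * g e)"
    using has_trop_eventually_continuous_pos[OF f] has_trop_eventually_continuous_pos[OF g] by eventually_elim (auto intro: continuous_intros)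
  moreover have "((\<lambda>e. e * ln (f e) + e * ln (g e)) \<longlongrightarrow> - a + - b) (at_right 0)"
    using has_trop_tendsto[OF f] has_trop_tendsto[OF g] by (rule tendsto_add)
  moreover have "\<forall>\<^sub>F e in at_right 0. e * ln (f e) + e * ln (g e) = e * ln (f e * g e)"
    using has_trop_pos[OF f] has_trop_pos[OF g] by eventually_elim (simp add: ln_mult distrib_left)
  ultimately show ?thesis
    unfolding has_trop_iff by (simp add: tendsto_cong)
qed

lemma has_trop_divide:
  assumes f: "has_trop f a" and g: "has_trop g b"
  shows "has_trop (\<lambda>e. f e / g e) (a - b)"
proof -
  have "\<forall>\<^sub>F d in at_right 0. continuous_on {0<..<d} (\<lambda>e. f e / g e) \<and> (\<forall>e\<in>{0<..<d}. 0 < f e / g e)"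
    using has_trop_eventually_continuous_pos[OF f] has_trop_eventually_continuous_pos[OF g] by eventually_elim (auto intro!: continuous_intros)
  moreover have "((\<lambda>e. e * ln (f e) - e * ln (g e)) \<longlongrightarrow> - a - - b) (at_right 0)"
    using has_trop_tendsto[OF f] has_trop_tendsto[OF g] by (rule tendsto_diff)
  moreover have "\<forall>\<^sub>F e in at_right 0. e * ln (f e) - e * ln (g e) = e * ln (f e / g e)"
    using has_trop_pos[OF f] has_trop_pos[OF g] by eventually_elim (simp add: ln_div right_diff_distrib)
  ultimately show ?thesis
    unfolding has_trop_iff by (simp add: tendsto_cong)
qed

lemma ln_add_le_max: "0 < x \<Longrightarrow> 0 < (y::real) \<Longrightarrow> ln (x + y) \<le> ln 2 + max (ln x) (ln y)"
proof -
  assume x: "0 < x" and y: "0 < y"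
  then have "ln (x + y) \<le> ln (2 * max x y)" by (subst ln_le_cancel_iff) auto
  also have "\<dots> = ln 2 + max (ln x) (ln y)" using x y by (simp add: ln_mult max_def)
  finally show ?thesis .
qed

text \<open>Sandwich \<open>e ln(f + g)\<close> between \<open>max (e ln f) (e ln g)\<close> and the same plus \<open>e ln 2\<close>.\<close>

lemma has_trop_add:
  assumes f: "has_trop f a" and g: "has_trop g b"
  shows "has_trop (\<lambda>e. f e + g e) (min a b)"
proof -
  have "\<forall>\<^sub>F d in at_right 0. continuous_on {0<..<d} (\<lambda>e. f e + g e) \<and> (\<forall>e\<in>{0<..<d}. 0 < f e + g e)"
    using has_trop_eventually_continuous_pos[OF f] has_trop_eventually_continuous_pos[OF g] by eventually_elim (auto intro: continuous_intros add_pos_pos)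
  moreover have "((\<lambda>e. e * ln (f e + g e)) \<longlongrightarrow> - min a b) (at_right 0)"
  proof (rule tendsto_sandwich)
    have lim: "((\<lambda>e. max (e * ln (f e)) (e * ln (g e))) \<longlongrightarrow> - min a b) (at_right 0)"
      unfolding minus_min_eq_max by (intro tendsto_max has_trop_tendsto f g)
    then show "((\<lambda>e. max (e * ln (f e)) (e * ln (g e))) \<longlongrightarrow> - min a b) (at_right 0)" .
    have "((\<lambda>e::real. e * ln 2) \<longlongrightarrow> 0) (at_right 0)"
      by (auto intro!: tendsto_eq_intros)
    from tendsto_add[OF this lim]
    show "((\<lambda>e. e * ln 2 + max (e * ln (f e)) (e * ln (g e))) \<longlongrightarrow> - min a b) (at_right 0)"
      by simp
    have pos: "\<forall>\<^sub>F e in at_right 0. 0 < e \<and> 0 < f e \<and> 0 < g e"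
      using has_trop_pos[OF f] has_trop_pos[OF g] eventually_at_right_less[of 0]
      by eventually_elim auto
    then show "\<forall>\<^sub>F e in at_right 0. max (e * ln (f e)) (e * ln (g e)) \<le> e * ln (f e + g e)"
      by eventually_elim (auto intro: mult_left_mono)
    from pos show "\<forall>\<^sub>F e in at_right 0. e * ln (f e + g e) \<le> e * ln 2 + max (e * ln (f e)) (e * ln (g e))"
    proof eventually_elim
      case (elim e)
      then have "e * ln (f e + g e) \<le> e * (ln 2 + max (ln (f e)) (ln (g e)))"
        using ln_add_le_max by (auto intro: mult_left_mono)
      also have "\<dots> = e * ln 2 + max (e * ln (f e)) (e * ln (g e))"
        using elim by (simp add: distrib_left max_mult_distrib_left)
      finally show ?case .
    qed
  qed
  ultimately show ?thesis
    unfolding has_trop_iff by blast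
qed

text \<open>The min-plus counterparts of \<open>gcarry\<close>, \<open>grow\<close>, \<open>gpass\<close>, written with truncated
  subtraction; index \<open>0\<close> carries \<open>0\<close>, as \<open>count_list\<close> does for arrays of positive numbers.\<close>

fun tcarry :: "(nat \<Rightarrow> nat) \<Rightarrow> (nat \<Rightarrow> nat) \<Rightarrow> nat \<Rightarrow> nat" where
  "tcarry c x 0 = c 1"
| "tcarry c x (Suc n) = c (Suc (Suc n)) + (tcarry c x n - x (Suc n))"

definition trow :: "(nat \<Rightarrow> nat) \<Rightarrow> (nat \<Rightarrow> nat) \<Rightarrow> nat \<Rightarrow> nat" where
  "trow c x i = (if i = 0 then 0 else min (x i) (tcarry c x (i - 1)))"

definition tpass :: "(nat \<Rightarrow> nat) \<Rightarrow> (nat \<Rightarrow> nat) \<Rightarrow> nat \<Rightarrow> nat" where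
  "tpass c x i = (if i = 0 then 0 else c (Suc i) + (x i - tcarry c x (i - 1)))"

fun tact :: "(nat \<Rightarrow> nat) list \<Rightarrow> (nat \<Rightarrow> nat) \<Rightarrow> (nat \<Rightarrow> nat) list" where
  "tact [] x = [x]"
| "tact (r # rs) x = trow r x # tact rs (tpass r x)"

definition tacts :: "(nat \<Rightarrow> nat) list \<Rightarrow> (nat \<Rightarrow> nat) list" where
  "tacts xs = foldl tact [] xs"

definition has_trop_vec :: "(nat \<Rightarrow> real \<Rightarrow> real) \<Rightarrow> (nat \<Rightarrow> nat) \<Rightarrow> bool" where
  "has_trop_vec r R \<longleftrightarrow> (\<forall>i\<ge>1. has_trop (r i) (real (R i)))"

lemma has_trop_gcarry:
  assumes "has_trop_vec r R" "has_trop_vec x X"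
  shows "has_trop (gcarry r x n) (real (tcarry R X n))"
proof (induction n)
  case 0
  with assms show ?case by (simp add: has_trop_vec_def)
next
  case (Suc n)
  have "has_trop (\<lambda>e. r (Suc (Suc n)) e * gcarry r x n e / (gcarry r x n e + x (Suc n) e))
     (real (R (Suc (Suc n))) + real (tcarry R X n) - min (real (tcarry R X n)) (real (X (Suc n))))"
    using assms Suc by (intro has_trop_divide has_trop_mult has_trop_add) (auto simp: has_trop_vec_def)
  moreover have "real (R (Suc (Suc n))) + real (tcarry R X n) - min (real (tcarry R X n)) (real (X (Suc n)))
      = real (tcarry R X (Suc n))"
    by (simp add: of_nat_diff min_def)
  ultimately show ?case
    by (simp add: fun_eq_iff)
qed

lemma has_trop_vec_grow:
  assumes r: "has_trop_vec r R" and x: "has_trop_vec x X"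
  shows "has_trop_vec (grow r x) (trow R X)"
  unfolding has_trop_vec_def
proof (intro allI impI)
  fix i :: nat
  assume "1 \<le> i"
  with assms have "has_trop (\<lambda>e. x i e + gcarry r x (i - 1) e) (min (real (X i)) (real (tcarry R X (i - 1))))"
    by (intro has_trop_add has_trop_gcarry) (auto simp: has_trop_vec_def)
  moreover have "min (real (X i)) (real (tcarry R X (i - 1))) = real (trow R X i)"
    using \<open>1 \<le> i\<close> by (simp add: trow_def min_def)
  ultimately show "has_trop (grow r x i) (real (trow R X i))"
    by (simp add: grow_def[abs_def])
qed

lemma has_trop_vec_gpass:
  assumes r: "has_trop_vec r R" and x: "has_trop_vec x X"
  shows "has_trop_vec (gpass r x) (tpass R X)"
  unfolding has_trop_vec_def
proof (intro allI impI)
  fix i :: nat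
  assume "1 \<le> i"
  with assms have "has_trop (\<lambda>e. r (Suc i) e * x i e / grow r x i e) (real (R (Suc i)) + real (X i) - real (trow R X i))"
    using has_trop_vec_grow[OF r x] by (intro has_trop_divide has_trop_mult) (auto simp: has_trop_vec_def)
  moreover have "real (R (Suc i)) + real (X i) - real (trow R X i) = real (tpass R X i)"
    using \<open>1 \<le> i\<close> by (simp add: tpass_def trow_def of_nat_diff min_def)
  ultimately show "has_trop (gpass r x i) (real (tpass R X i))"
    by (simp add: gpass_def[abs_def])
qed

lemma has_trop_gact:
  "list_all2 has_trop_vec rs Rs \<Longrightarrow> has_trop_vec x X \<Longrightarrow> list_all2 has_trop_vec (gact rs x) (tact Rs X)"
proof (induction rs arbitrary: Rs x X)
  case (Cons r rs)
  then obtain R Rs' where "Rs = R # Rs'" by (cases Rs) auto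
  with Cons show ?case by (auto intro: has_trop_vec_grow has_trop_vec_gpass)
qed simp

lemma has_trop_gacts: "list_all2 has_trop_vec xs Xs \<Longrightarrow> list_all2 has_trop_vec (gacts xs) (tacts Xs)"
proof (induction xs arbitrary: Xs rule: rev_induct)
  case Nil
  then show ?case by (simp add: gacts_def tacts_def)
next
  case (snoc y xs)
  then obtain Xs' Y where Xs: "Xs = Xs' @ [Y]" "list_all2 has_trop_vec xs Xs'" "has_trop_vec y Y"
    by (auto simp: list_all2_append1 list_all2_Cons1)
  with snoc.IH show ?case
    by (simp add: gacts_def tacts_def has_trop_gact)
qed

section \<open>The box-ball step on multiplicities\<close>

text \<open>A carrier sweeps the cells from left to right holding \<open>t\<close> balls: it picks up every ball
  and drops one into each empty cell it passes while loaded.  \<open>bb_fill\<close> marks the cells that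
  receive a ball, \<open>bb_carry\<close> is the final load.\<close>

fun bb_fill :: "bool list \<Rightarrow> nat \<Rightarrow> bool list" where
  "bb_fill [] t = []"
| "bb_fill (b # bs) t = (if b then False # bb_fill bs (Suc t) else (0 < t) # bb_fill bs (t - 1))"

fun bb_carry :: "bool list \<Rightarrow> nat \<Rightarrow> nat" where
  "bb_carry [] t = t"
| "bb_carry (b # bs) t = (if b then bb_carry bs (Suc t) else bb_carry bs (t - 1))"

lemma length_bb_fill [simp]: "length (bb_fill bs t) = length bs"
  by (induction bs arbitrary: t) auto

lemma bb_fill_append: "bb_fill (xs @ ys) t = bb_fill xs t @ bb_fill ys (bb_carry xs t)"
  by (induction xs arbitrary: t) auto

lemma bb_carry_append: "bb_carry (xs @ ys) t = bb_carry ys (bb_carry xs t)"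
  by (induction xs arbitrary: t) auto

lemma bb_fill_block:
  "bb_fill (replicate c True @ replicate x False) t
     = replicate c False @ replicate (min (t + c) x) True @ replicate (x - (t + c)) False"
proof -
  have "bb_fill (replicate c True @ ys) t = replicate c False @ bb_fill ys (t + c)" for ys
    by (induction c arbitrary: t) auto
  moreover have "bb_fill (replicate x False) s = replicate (min s x) True @ replicate (x - s) False" for s
  proof (induction x arbitrary: s)
    case (Suc x)
    then show ?case by (cases s) auto
  qed simp
  ultimately show ?thesis by simp
qed

lemma bb_carry_block: "bb_carry (replicate c True @ replicate x False) t = t + c - x"
proof -
  have "bb_carry (replicate c True @ ys) t = bb_carry ys (t + c)" for ys
    by (induction c arbitrary: t) auto
  moreover have "bb_carry (replicate x False) s = s - x" for s
    by (induction x arbitrary: s) auto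
  ultimately show ?thesis by simp
qed

definition fill_set :: "bool list \<Rightarrow> nat \<Rightarrow> nat \<Rightarrow> nat set" where
  "fill_set ds q t = {a. q \<le> a \<and> a < q + length ds \<and> bb_fill ds t ! (a - q)}"

text \<open>The cells of \<open>ds\<close>, placed at positions \<open>q, q + 1, \<dots>\<close>, taken by \<open>t\<close> balls arriving
  from the left: the first \<open>t\<close> empty ones.\<close>

fun ball_targets :: "bool list \<Rightarrow> nat \<Rightarrow> nat \<Rightarrow> nat set" where
  "ball_targets [] p t = {}"
| "ball_targets (b # bs) p t =
     (if b then ball_targets bs (Suc p) t
      else if t = 0 then {} else insert p (ball_targets bs (Suc p) (t - 1)))"

definition free_cells :: "bool list \<Rightarrow> nat \<Rightarrow> nat \<Rightarrow> nat set" where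
  "free_cells ds q t = {c. q \<le> c \<and> c < q + length ds \<and> \<not> ds ! (c - q) \<and> c \<notin> ball_targets ds q t}"

lemma fill_set_Nil [simp]: "fill_set [] q t = {}"
  by (simp add: fill_set_def)

lemma fill_set_True: "fill_set (True # ds) q t = fill_set ds (Suc q) (Suc t)"
  unfolding fill_set_def by (auto simp: nth_Cons' Suc_diff_Suc)

lemma fill_set_False:
  "fill_set (False # ds) q t = (if t = 0 then fill_set ds (Suc q) 0 else insert q (fill_set ds (Suc q) (t - 1)))"
  unfolding fill_set_def by (auto simp: nth_Cons')

lemma ball_targets_0 [simp]: "ball_targets ds q 0 = {}"
  by (induction ds arbitrary: q) auto

lemma ball_targets_subset: "ball_targets ds q t \<subseteq> {q..<q + length ds}"
  by (induction ds arbitrary: q t) (auto, fastforce+)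

lemma ball_targets_Suc:
  "ball_targets ds q (Suc t) =
     (if free_cells ds q t = {} then ball_targets ds q t
      else insert (LEAST c. c \<in> free_cells ds q t) (ball_targets ds q t))"
proof (induction ds arbitrary: q t)
  case Nil
  then show ?case by (simp add: free_cells_def)
next
  case (Cons b ds)
  show ?case
  proof (cases b)
    case True
    then have "free_cells (b # ds) q t = free_cells ds (Suc q) t"
      unfolding free_cells_def by (auto simp: nth_Cons')
    with True Cons.IH[of "Suc q" t] show ?thesis by simp
  next
    case False
    show ?thesis
    proof (cases t)
      case 0
      have "(LEAST c. c \<in> free_cells (b # ds) q t) = q"
        by (rule Least_equality) (use False 0 in \<open>auto simp: free_cells_def\<close>)
      moreover have "q \<in> free_cells (b # ds) q t"
        using False 0 by (simp add: free_cells_def)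
      ultimately show ?thesis using False 0 by auto
    next
      case (Suc t')
      then have "free_cells (b # ds) q t = free_cells ds (Suc q) t'"
        using False ball_targets_subset[of ds "Suc q" t'] unfolding free_cells_def by (auto simp: nth_Cons')
      with False Suc Cons.IH[of "Suc q" t'] show ?thesis by auto
    qed
  qed
qed

definition ts_move :: "bool list \<Rightarrow> nat \<Rightarrow> nat set \<Rightarrow> nat set" where
  "ts_move bs = (\<lambda>a S. if (\<exists>c. a < c \<and> c < length bs \<and> \<not> bs ! c \<and> c \<notin> S)
                       then insert (LEAST c. a < c \<and> c < length bs \<and> \<not> bs ! c \<and> c \<notin> S) S
                       else S)"

lemma tsstep_eq_fold_ts_move: "tsstep bs = fold (ts_move bs) (filter (\<lambda>a. bs ! a) [0..<length bs]) {}"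
  unfolding tsstep_def ts_move_def ..

text \<open>The ball at \<open>p\<close> is moved to the first empty cell beyond the targets already claimed.\<close>

lemma ts_move_ball:
  assumes ds: "drop (Suc p) bs = ds" and p: "p < length bs" and S0: "S0 \<subseteq> {..p}"
  shows "ts_move bs p (S0 \<union> ball_targets ds (Suc p) t) = S0 \<union> ball_targets ds (Suc p) (Suc t)"
proof -
  have len: "length bs = Suc p + length ds"
    using ds p by auto
  have "(p < c \<and> c < length bs \<and> \<not> bs ! c \<and> c \<notin> S0 \<union> ball_targets ds (Suc p) t)
      \<longleftrightarrow> c \<in> free_cells ds (Suc p) t" for c
  proof (cases "p < c \<and> c < length bs")
    case True
    then have "ds ! (c - Suc p) = bs ! c"
      using ds by (auto simp flip: ds)
    with True S0 len show ?thesis by (auto simp: free_cells_def)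
  qed (use len in \<open>auto simp: free_cells_def\<close>)
  then show ?thesis
    by (simp add: ts_move_def ball_targets_Suc)
qed

lemma fold_ts_move:
  "drop p bs = ds \<Longrightarrow> p \<le> length bs \<Longrightarrow> S0 \<subseteq> {..<p} \<Longrightarrow>
   fold (ts_move bs) (filter (\<lambda>a. bs ! a) [p..<length bs]) (S0 \<union> ball_targets ds p t) = S0 \<union> fill_set ds p t"
proof (induction ds arbitrary: p S0 t)
  case Nil
  then show ?case by simp
next
  case (Cons b ds)
  then have p: "p < length bs"
    by (metis drop_all list.distinct(1) not_le)
  with Cons.prems(1) have bp: "bs ! p = b" and ds: "drop (Suc p) bs = ds"
    by (auto simp: Cons_nth_drop_Suc[symmetric])
  have upt: "[p..<length bs] = p # [Suc p..<length bs]"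
    using p by (simp add: upt_conv_Cons)
  have S0: "S0 \<subseteq> {..p}" "insert p S0 \<subseteq> {..<Suc p}" "S0 \<subseteq> {..<Suc p}"
    using Cons.prems(3) by auto
  show ?case
  proof (cases b)
    case True
    with bp upt ts_move_ball[OF ds p S0(1)] Cons.IH[OF ds _ S0(3)] p show ?thesis
      by (simp add: fill_set_True)
  next
    case False
    with bp upt Cons.IH[OF ds _ S0(2)] Cons.IH[OF ds _ S0(3), of 0] p show ?thesis
      by (simp add: fill_set_False)
  qed
qed

lemma tsstep_eq_bb_fill: "a < length bs \<Longrightarrow> a \<in> tsstep bs \<longleftrightarrow> bb_fill bs 0 ! a"
  using fold_ts_move[of 0 bs bs "{}" 0] by (simp add: tsstep_eq_fold_ts_move fill_set_def)

definition mark_fill :: "nat \<Rightarrow> (nat \<times> bool) list \<Rightarrow> ((nat \<times> bool) \<times> bool) list" where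
  "mark_fill t ps = zip ps (bb_fill (map snd ps) t)"

definition new_row :: "((nat \<times> bool) \<times> bool) list \<Rightarrow> nat list" where
  "new_row ps = map (\<lambda>(u, v). fst u) (filter (\<lambda>(u, v). \<not> snd u \<and> v) ps)"

definition new_arr :: "((nat \<times> bool) \<times> bool) list \<Rightarrow> nat list" where
  "new_arr ps = map (\<lambda>(u, v). if snd u then fst u - 1 else fst u)
                  (filter (\<lambda>(u, v). if snd u then fst u - 1 \<noteq> 0 else \<not> v) ps)"

lemma new_row_append [simp]: "new_row (xs @ ys) = new_row xs @ new_row ys"
  by (simp add: new_row_def)

lemma new_arr_append [simp]: "new_arr (xs @ ys) = new_arr xs @ new_arr ys"
  by (simp add: new_arr_def)

lemma mark_fill_append: "mark_fill t (ps @ qs) = mark_fill t ps @ mark_fill (bb_carry (map snd ps) t) qs"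
  by (simp add: mark_fill_def bb_fill_append)

lemma map_filter_upt_nth_eq_zip:
  assumes "length ys = length xs"
  shows "map (\<lambda>a. g (xs ! a) (ys ! a)) (filter (\<lambda>a. P (xs ! a) (ys ! a)) [0..<length xs])
       = map (\<lambda>(u, v). g u v) (filter (\<lambda>(u, v). P u v) (zip xs ys))"
proof -
  have "zip xs ys = map (\<lambda>a. (xs ! a, ys ! a)) [0..<length xs]"
    using assms by (intro nth_equalityI) auto
  then show ?thesis by (simp add: filter_map o_def)
qed

lemma bbrow_eq_new_row_new_arr:
  "bbrow C x = (new_row (mark_fill 0 (cells C x)), new_arr (mark_fill 0 (cells C x)))"
proof -
  let ?cs = "cells C x"
  let ?fill = "bb_fill (map snd ?cs) 0"
  have len: "length ?fill = length ?cs" by simp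
  have "a < length ?cs \<Longrightarrow> a \<in> tsstep (map snd ?cs) \<longleftrightarrow> ?fill ! a" for a
    by (simp add: tsstep_eq_bb_fill)
  then have "filter (\<lambda>a. \<not> snd (?cs ! a) \<and> a \<in> tsstep (map snd ?cs)) [0..<length ?cs]
        = filter (\<lambda>a. \<not> snd (?cs ! a) \<and> ?fill ! a) [0..<length ?cs]"
    and "filter (\<lambda>a. if snd (?cs ! a) then fst (?cs ! a) - 1 \<noteq> 0 else a \<notin> tsstep (map snd ?cs)) [0..<length ?cs]
        = filter (\<lambda>a. if snd (?cs ! a) then fst (?cs ! a) - 1 \<noteq> 0 else \<not> ?fill ! a) [0..<length ?cs]"
    by (auto intro: filter_cong)
  then show ?thesis
    unfolding bbrow_def Let_def new_row_def new_arr_def mark_fill_def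
    using map_filter_upt_nth_eq_zip[OF len, of "\<lambda>u v. fst u" "\<lambda>u v. \<not> snd u \<and> v"]
      map_filter_upt_nth_eq_zip[OF len, of "\<lambda>u v. if snd u then fst u - 1 else fst u"
        "\<lambda>u v. if snd u then fst u - 1 \<noteq> 0 else \<not> v"]
    by simp
qed

definition cell_block :: "nat list \<Rightarrow> nat list \<Rightarrow> nat \<Rightarrow> (nat \<times> bool) list" where
  "cell_block C x k = replicate (count_list C k) (k, True) @ replicate (count_list x k) (k, False)"

lemma count_list_replicate [simp]: "count_list (replicate n y) a = (if y = a then n else 0)"
  by (induction n) auto

lemma map_snd_cell_block:
  "map snd (cell_block C x k) = replicate (count_list C k) True @ replicate (count_list x k) False"
  by (simp add: cell_block_def)

lemma mark_fill_cell_block: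
  "mark_fill t (cell_block C x k)
     = replicate (count_list C k) ((k, True), False)
       @ replicate (min (t + count_list C k) (count_list x k)) ((k, False), True)
       @ replicate (count_list x k - (t + count_list C k)) ((k, False), False)"
proof -
  have "replicate (count_list x k) (k, False)
      = replicate (min (t + count_list C k) (count_list x k)) (k, False)
        @ replicate (count_list x k - (t + count_list C k)) (k, False)"
    by (simp flip: replicate_add)
  then show ?thesis
    unfolding mark_fill_def map_snd_cell_block bb_fill_block
    by (simp add: cell_block_def zip_append)
qed

definition tcarry_out :: "(nat \<Rightarrow> nat) \<Rightarrow> (nat \<Rightarrow> nat) \<Rightarrow> nat \<Rightarrow> nat" where
  "tcarry_out c x n = (if n = 0 then 0 else tcarry c x (n - 1) - x n)"

lemma tcarry_out_add: "tcarry_out c x n + c (Suc n) = tcarry c x n"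
  by (cases n) (auto simp: tcarry_out_def)

definition cell_blocks :: "nat list \<Rightarrow> nat list \<Rightarrow> nat \<Rightarrow> (nat \<times> bool) list" where
  "cell_blocks C x n = concat (map (cell_block C x) [1..<Suc n])"

lemma cells_eq_cell_blocks: "cells C x = cell_blocks C x (Max (insert 0 (set C \<union> set x)))"
  unfolding cells_def cell_blocks_def cell_block_def ..

lemma cell_blocks_0 [simp]: "cell_blocks C x 0 = []"
  by (simp add: cell_blocks_def)

lemma bb_carry_cell_block:
  "bb_carry (map snd (cell_block C x k)) t = t + count_list C k - count_list x k"
  by (simp only: map_snd_cell_block bb_carry_block)

lemma cell_blocks_Suc: "cell_blocks C x (Suc n) = cell_blocks C x n @ cell_block C x (Suc n)"
  by (simp add: cell_blocks_def)

lemma bb_carry_cell_blocks: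
  "bb_carry (map snd (cell_blocks C x n)) 0 = tcarry_out (count_list C) (count_list x) n"
proof (induction n)
  case (Suc n)
  have "bb_carry (map snd (cell_blocks C x (Suc n))) 0
      = tcarry_out (count_list C) (count_list x) n + count_list C (Suc n) - count_list x (Suc n)"
    by (simp add: cell_blocks_Suc bb_carry_append bb_carry_cell_block Suc.IH)
  also have "\<dots> = tcarry (count_list C) (count_list x) n - count_list x (Suc n)"
    by (simp only: tcarry_out_add)
  finally show ?case
    by (simp add: tcarry_out_def)
qed (simp add: tcarry_out_def)

lemma mark_fill_cell_blocks_Suc:
  "mark_fill 0 (cell_blocks C x (Suc n))
     = mark_fill 0 (cell_blocks C x n)
       @ replicate (count_list C (Suc n)) ((Suc n, True), False)
       @ replicate (min (tcarry (count_list C) (count_list x) n) (count_list x (Suc n))) ((Suc n, False), True)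
       @ replicate (count_list x (Suc n) - tcarry (count_list C) (count_list x) n) ((Suc n, False), False)"
  unfolding cell_blocks_Suc mark_fill_append bb_carry_cell_blocks mark_fill_cell_block tcarry_out_add ..

lemma count_new_row_cell_blocks:
  "count_list (new_row (mark_fill 0 (cell_blocks C x n))) a
     = (if 1 \<le> a \<and> a \<le> n then min (tcarry (count_list C) (count_list x) (a - 1)) (count_list x a) else 0)"
proof (induction n)
  case 0
  then show ?case by (simp add: mark_fill_def new_row_def)
next
  case (Suc n)
  then show ?case
    by (auto simp: mark_fill_cell_blocks_Suc new_row_def filter_replicate)
qed

lemma count_new_arr_cell_blocks:
  "count_list (new_arr (mark_fill 0 (cell_blocks C x n))) a
     = (if 1 \<le> a \<and> Suc a \<le> n then count_list C (Suc a) else 0)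
       + (if 1 \<le> a \<and> a \<le> n then count_list x a - tcarry (count_list C) (count_list x) (a - 1) else 0)"
proof (induction n)
  case 0
  then show ?case by (simp add: mark_fill_def new_arr_def)
next
  case (Suc n)
  then show ?case
    by (auto simp: mark_fill_cell_blocks_Suc new_arr_def filter_replicate)
qed

lemma count_bbrow_row: "count_list (fst (bbrow C x)) = trow (count_list C) (count_list x)"
proof
  fix a
  define m where "m = Max (insert 0 (set C \<union> set x))"
  have "k \<le> m" if "k \<in> set C \<union> set x" for k
    unfolding m_def using that by (intro Max_ge) auto
  then have "a \<notin> set x" if "m < a"
    using that by force
  then show "count_list (fst (bbrow C x)) a = trow (count_list C) (count_list x) a"
    by (auto simp: bbrow_eq_new_row_new_arr cells_eq_cell_blocks count_new_row_cell_blocks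
        trow_def min_def simp flip: m_def)
qed

lemma count_bbrow_arr: "count_list (snd (bbrow C x)) = tpass (count_list C) (count_list x)"
proof
  fix a
  define m where "m = Max (insert 0 (set C \<union> set x))"
  have le_m: "k \<le> m" if "k \<in> set C \<union> set x" for k
    unfolding m_def using that by (intro Max_ge) auto
  then have "a \<notin> set x" if "m < a"
    using that by force
  moreover have "Suc a \<notin> set C" if "m \<le> a"
    using le_m that by force
  ultimately show "count_list (snd (bbrow C x)) a = tpass (count_list C) (count_list x) a"
    by (auto simp: bbrow_eq_new_row_new_arr cells_eq_cell_blocks count_new_arr_cell_blocks
        tpass_def simp flip: m_def)
qed

lemma count_act: "map count_list (act rows x) = tact (map count_list rows) (count_list x)"
proof (induction rows arbitrary: x)
  case (Cons r rs)
  obtain r' x' where "bbrow r x = (r', x')" by (cases "bbrow r x")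
  with Cons count_bbrow_row[of r x] count_bbrow_arr[of r x] show ?case by simp
qed simp

lemma count_acts: "map count_list (acts xs) = tacts (map count_list xs)"
  by (induction xs rule: rev_induct) (simp_all add: acts_def tacts_def count_act)

lemma count_list_concat: "count_list (concat xss) a = sum_list (map (\<lambda>xs. count_list xs a) xss)"
  by (induction xss) auto

lemma count_warr:
  assumes fin: "finite {i. 1 \<le> i \<and> W i j \<noteq> 0}" and i: "1 \<le> i"
  shows "count_list (warr W j) i = W i j"
proof -
  define m where "m = Max (insert 0 {i. 1 \<le> i \<and> W i j \<noteq> 0})"
  have "i \<le> m" if "W i j \<noteq> 0"
    unfolding m_def using fin i that by (intro Max_ge) auto
  then have "W i j = 0" if "m < i"
    using that by force
  moreover have "count_list (warr W j) i = (\<Sum>k\<in>{1..m}. if k = i then W k j else 0)"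
    unfolding warr_def m_def[symmetric] count_list_concat map_map o_def count_list_replicate
    by (subst interv_sum_list_conv_sum_set_nat) (rule sum.cong, auto)
  ultimately show ?thesis
    using i by auto
qed

section \<open>Truncation of the infinite families\<close>

lemma Fm_cong_below: "(\<And>i. 1 \<le> i \<Longrightarrow> i < K \<Longrightarrow> v i = w i) \<Longrightarrow> lower_eq_below K (Fm v) (Fm w)"
  unfolding lower_eq_below_def Fm_def by auto

lemma Fk_prod_factor_eq_gacts:
  assumes pos: "list_all (\<lambda>r. pos_at r e) xs" and len: "length us = length xs"
    and eq: "lower_eq_below K (mprod (map (\<lambda>v. Fm (vec_at v e)) xs)) (Fk_prod us)"
    and "j < length xs" "1 \<le> i" "i + j < K"
  shows "(us ! j) i = (gacts xs ! j) i e"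
proof -
  have "lower_eq_below K (Fk_prod (map (\<lambda>r. vec_at r e) (gacts xs))) (Fk_prod us)"
    using lower_eq_imp_below[OF lower_eq_sym[OF mprod_Fm_eq_Fk_prod_gacts[OF pos]]] eq
    by (rule lower_eq_below_trans)
  moreover have "list_all (\<lambda>u. \<forall>i\<ge>1. 0 < u i) (map (\<lambda>r. vec_at r e) (gacts xs))"
    using pos_at_gacts[OF pos] by (simp add: list_all_iff pos_at_def vec_at_def)
  ultimately show ?thesis
    using Fk_prod_unique_below[of "map (\<lambda>r. vec_at r e) (gacts xs)" us K j i] len assms(4-)
    by (simp add: vec_at_def)
qed

text \<open>Entries below row \<open>K\<close> do not affect the rows \<open>< K\<close> of the product; replacing them by the
  germ \<open>1\<close> makes positivity of all entries an eventual property.\<close>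

definition truncate_rows :: "nat \<Rightarrow> (nat \<Rightarrow> nat \<Rightarrow> real \<Rightarrow> real) \<Rightarrow> nat \<Rightarrow> nat \<Rightarrow> real \<Rightarrow> real" where
  "truncate_rows K V i j = (if i \<le> K then V i j else (\<lambda>_. 1))"

lemma eventually_gacts_truncate_rows_eq:
  fixes V U :: "nat \<Rightarrow> nat \<Rightarrow> real \<Rightarrow> real"
  assumes pos: "\<And>i j. 1 \<le> i \<Longrightarrow> j \<le> N \<Longrightarrow> \<forall>\<^sub>F e in at_right 0. 0 < V i j e"
    and prod: "\<And>a b. \<forall>\<^sub>F e in at_right 0.
            mprod (map (\<lambda>j. Fm (\<lambda>i. V i j e)) (rev [0..<Suc N])) a b
          = mprod (map (\<lambda>k. Fkm k (\<lambda>i. U i k e)) (rev [1..<N + 2])) a b"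
    and ij: "1 \<le> i" "1 \<le> j" "j \<le> N + 1" "i + j \<le> K"
  shows "\<forall>\<^sub>F e in at_right 0. (gacts (map (\<lambda>j i. truncate_rows K V i j) (rev [0..<Suc N])) ! (j - 1)) i e = U i j e"
proof -
  let ?xs = "map (\<lambda>j i. truncate_rows K V i j) (rev [0..<Suc N])"
  have "\<forall>\<^sub>F e in at_right 0. \<forall>p\<in>{1..K} \<times> {..N}. 0 < V (fst p) (snd p) e"
    by (rule eventually_ball_finite) (use pos in auto)
  moreover have "\<forall>\<^sub>F e in at_right 0. \<forall>p\<in>{..<K} \<times> {..<K}.
       mprod (map (\<lambda>j. Fm (\<lambda>i. V i j e)) (rev [0..<Suc N])) (fst p) (snd p)
     = mprod (map (\<lambda>k. Fkm k (\<lambda>i. U i k e)) (rev [1..<N + 2])) (fst p) (snd p)"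
    by (rule eventually_ball_finite) (use prod in auto)
  ultimately show ?thesis
  proof eventually_elim
    case (elim e)
    have pos_xs: "list_all (\<lambda>r. pos_at r e) ?xs"
      using elim(1) by (auto simp: list_all_iff pos_at_def truncate_rows_def)
    have "lower_eq_below K (mprod (map (\<lambda>v. Fm (vec_at v e)) ?xs))
                                    (mprod (map (\<lambda>j. Fm (\<lambda>i. V i j e)) (rev [0..<Suc N])))"
      by (rule mprod_cong_below)
         (auto simp: list_all2_conv_all_nth vec_at_def truncate_rows_def simp del: upt_Suc intro!: Fm_cong_below)
    also have "lower_eq_below K \<dots> (mprod (map (\<lambda>k. Fkm k (\<lambda>i. U i k e)) (rev [1..<N + 2])))"
      using elim(2) by (auto simp: lower_eq_below_def)
    also have "lower_eq_below K \<dots> (Fk_prod (map (\<lambda>k i. U i k e) [1..<N + 2]))"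
      using lower_eq_imp_below[OF mprod_Fkm_eq_mshift_Fk_prod[of "\<lambda>k i. U i k e" 0 "Suc N"]] by simp
    finally have "(map (\<lambda>k i. U i k e) [1..<N + 2] ! (j - 1)) i = (gacts ?xs ! (j - 1)) i e"
      using ij by (intro Fk_prod_factor_eq_gacts[OF pos_xs]) auto
    with ij show ?case
      by (simp add: nth_upt del: upt_Suc)
  qed
qed

lemma has_trop_vec_truncate_rows:
  assumes fin: "finite {i. 1 \<le> i \<and> W i j \<noteq> 0}"
    and V: "\<And>i. 1 \<le> i \<Longrightarrow> has_trop (V i j) (real (W i j))"
    and W0: "\<And>i. K < i \<Longrightarrow> W i j = 0"
  shows "has_trop_vec (\<lambda>i. truncate_rows K V i j) (count_list (warr W j))"
  unfolding has_trop_vec_def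
  using V W0 has_trop_one by (auto simp: truncate_rows_def count_warr[of W j, OF fin])

lemma finite_support_bound:
  fixes W :: "nat \<Rightarrow> nat \<Rightarrow> nat"
  assumes "\<And>j. j \<le> N \<Longrightarrow> finite {i. 1 \<le> i \<and> W i j \<noteq> 0}"
  shows "\<exists>B. \<forall>i j. B < i \<longrightarrow> j \<le> N \<longrightarrow> W i j = 0"
proof -
  have "finite (\<Union>j\<le>N. {i. 1 \<le> i \<and> W i j \<noteq> 0})"
    by (intro finite_UN_I assms) auto
  then obtain B where B: "\<forall>i\<in>(\<Union>j\<le>N. {i. 1 \<le> i \<and> W i j \<noteq> 0}). i \<le> B"
    by (auto simp: finite_nat_set_iff_bounded_le)
  have "W i j = 0" if "B < i" "j \<le> N" for i j
  proof (rule ccontr)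
    assume "W i j \<noteq> 0"
    with that have "i \<in> (\<Union>j\<le>N. {i. 1 \<le> i \<and> W i j \<noteq> 0})" by auto
    with B have "i \<le> B" by blast
    with \<open>B < i\<close> show False by simp
  qed
  then show ?thesis by blast
qed

lemma row_counts_eq_trop:
  fixes V U :: "nat \<Rightarrow> nat \<Rightarrow> real \<Rightarrow> real"
  assumes fin: "\<And>j. j \<le> N \<Longrightarrow> finite {i. 1 \<le> i \<and> W i j \<noteq> 0}"
    and V: "\<And>i j. 1 \<le> i \<Longrightarrow> j \<le> N \<Longrightarrow> has_trop (V i j) (real (W i j))"
    and prod: "\<And>a b. \<forall>\<^sub>F e in at_right 0.
            mprod (map (\<lambda>j. Fm (\<lambda>i. V i j e)) (rev [0..<Suc N])) a b
          = mprod (map (\<lambda>k. Fkm k (\<lambda>i. U i k e)) (rev [1..<N + 2])) a b"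
    and ij: "1 \<le> i" "1 \<le> j" "j \<le> N + 1"
  shows "real (count_list (acts (map (warr W) (rev [0..<Suc N])) ! (j - 1)) i) = trop (U i j)"
proof -
  obtain B where B: "\<And>i' j'. B < i' \<Longrightarrow> j' \<le> N \<Longrightarrow> W i' j' = 0"
    using finite_support_bound[of N W] fin by blast
  define K where "K = B + i + j"
  let ?ws = "map (warr W) (rev [0..<Suc N])"
  let ?xs = "map (\<lambda>j i. truncate_rows K V i j) (rev [0..<Suc N])"
  have "list_all2 has_trop_vec ?xs (map count_list ?ws)"
    using fin V B by (auto simp: list_all2_conv_all_nth K_def rev_nth simp del: upt_Suc
        intro!: has_trop_vec_truncate_rows)
  then have L: "list_all2 has_trop_vec (gacts ?xs) (map count_list (acts ?ws))"
    unfolding count_acts by (rule has_trop_gacts)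
  then have "has_trop ((gacts ?xs ! (j - 1)) i) (real (count_list (acts ?ws ! (j - 1)) i))"
    using list_all2_nthD[OF L, of "j - 1"] list_all2_lengthD[OF L] ij
    by (simp add: has_trop_vec_def del: upt_Suc)
  moreover have "\<forall>\<^sub>F e in at_right 0. (gacts ?xs ! (j - 1)) i e = U i j e"
    using V ij by (intro eventually_gacts_truncate_rows_eq[OF has_trop_pos prod]) (auto simp: K_def)
  ultimately have "has_trop (U i j) (real (count_list (acts ?ws ! (j - 1)) i))"
    by (rule has_trop_cong)
  then show ?thesis
    by (simp add: has_trop_def)
qed

theorem theorem3p4:
  shows "\<exists>N0::nat. \<forall>N\<ge>N0. \<forall>(W::nat \<Rightarrow> nat \<Rightarrow> nat) (V::nat \<Rightarrow> nat \<Rightarrow> real \<Rightarrow> real)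
           (U::nat \<Rightarrow> nat \<Rightarrow> real \<Rightarrow> real).
      (\<forall>j\<le>N. finite {i. 1 \<le> i \<and> W i j \<noteq> 0})
      \<and> (\<forall>i j. 1 \<le> i \<and> j \<le> N \<longrightarrow> inM (V i j) \<and> trop (V i j) = real (W i j))
      \<and> (\<forall>i k. 1 \<le> i \<and> 1 \<le> k \<and> k \<le> N + 1 \<longrightarrow> inM (U i k))
      \<and> (\<forall>a b. \<forall>\<^sub>F e in at_right 0.
            mprod (map (\<lambda>j. Fm (\<lambda>i. V i j e)) (rev [0..<Suc N])) a b
          = mprod (map (\<lambda>k. Fkm k (\<lambda>i. U i k e)) (rev [1..<N + 2])) a b)
      \<longrightarrow> (\<forall>i j. 1 \<le> i \<and> 1 \<le> j \<and> j \<le> N + 1 \<longrightarrow>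
            real (count_list (acts (map (warr W) (rev [0..<Suc N])) ! (j - 1)) i) = trop (U i j))"
proof (intro exI[of _ 0] allI impI, elim conjE)
  fix N i j :: nat and W :: "nat \<Rightarrow> nat \<Rightarrow> nat" and V U :: "nat \<Rightarrow> nat \<Rightarrow> real \<Rightarrow> real"
  assume "\<forall>j\<le>N. finite {i. 1 \<le> i \<and> W i j \<noteq> 0}"
    and "\<forall>i j. 1 \<le> i \<and> j \<le> N \<longrightarrow> inM (V i j) \<and> trop (V i j) = real (W i j)"
    and "\<forall>a b. \<forall>\<^sub>F e in at_right 0. mprod (map (\<lambda>j. Fm (\<lambda>i. V i j e)) (rev [0..<Suc N])) a b
          = mprod (map (\<lambda>k. Fkm k (\<lambda>i. U i k e)) (rev [1..<N + 2])) a b"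
    and "1 \<le> i" "1 \<le> j" "j \<le> N + 1"
  then show "real (count_list (acts (map (warr W) (rev [0..<Suc N])) ! (j - 1)) i) = trop (U i j)"
    by (intro row_counts_eq_trop[where V = V and U = U]) (simp_all add: has_trop_def)
qed

end
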